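(* Let $\mathcal{X}$ be a finite nonempty set of types, let $n=(n_x)_{x\in\mathcal{X}}$ be nonnegative integers such that $n_x$ is even for every $x\in\mathcal{X}$, and let $\Phi=(\Phi_{xy})_{x,y\in\mathcal{X}}$ be a real matrix with $\Phi_{xy}=\Phi_{yx}$ for all $x,y$. Then $\mathcal{W}_{\mathcal{P}}(n,\Phi)=\mathcal{W}_{\mathcal{B}}(n,n,\Phi/2)$.
   Context: Roommate matching with transferable utility: $n_x$ is the number of individuals of type $x$; a pair of types $\{x,y\}$ (possibly $x=y$) generates joint surplus $\Phi_{xy}$; singles get utility $0$. Feasible roommate matchings: $\mathcal{P}(n)=\{\mu=(\mu_{xy})_{x,y\in\mathcal{X}}:\ \mu_{xy}\in\mathbb{N},\ \mu_{xy}=\mu_{yx},\ 2\mu_{xx}+\sum_{y\neq x}\mu_{xy}\le n_x\ \forall x\}$. Total surplus $S_R(\mu;\Phi)=\sum_x\mu_{xx}\Phi_{xx}+\sum_{x\neq y}\mu_{xy}\Phi_{xy}/2$, and $\mathcal{W}_{\mathcal{P}}(n,\Phi)=\max_{\mu\in\mathcal{P}(n)}S_R(\mu;\Phi)$. Bipartite problem: $\mathcal{B}(n,n)=\{\nu\in\mathbb{N}^{\mathcal{X}\times\mathcal{X}}:\ \sum_y\nu_{xy}\le n_x\ \forall x,\ \sum_x\nu_{xy}\le n_y\ \forall y\}$ and $\mathcal{W}_{\mathcal{B}}(n,n,\Phi/2)=\max_{\nu\in\mathcal{B}(n,n)}\sum_{x,y}\nu_{xy}\Phi_{xy}/2$.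 *)

theory Defs
  imports Main Complex_Main
begin

text \<open>Types form a finite nonempty type 'x (every HOL type is nonempty).
  Populations n :: 'x => nat, surplus Phi :: 'x => 'x => real,
  matchings are nat-valued matrices 'x => 'x => nat.\<close>

definition roommate_matchings :: "('x::finite \<Rightarrow> nat) \<Rightarrow> ('x \<Rightarrow> 'x \<Rightarrow> nat) set" where
  "roommate_matchings n = {\<mu>. (\<forall>x y. \<mu> x y = \<mu> y x) \<and>
      (\<forall>x. 2 * \<mu> x x + (\<Sum>y\<in>UNIV - {x}. \<mu> x y) \<le> n x)}"

definition S_R :: "('x::finite \<Rightarrow> 'x \<Rightarrow> nat) \<Rightarrow> ('x \<Rightarrow> 'x \<Rightarrow> real) \<Rightarrow> real" where
  "S_R \<mu> \<Phi> = (\<Sum>x\<in>UNIV. real (\<mu> x x) * \<Phi> x x)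
      + (\<Sum>p\<in>{(x,y). x \<noteq> y}. real (\<mu> (fst p) (snd p)) * \<Phi> (fst p) (snd p) / 2)"

definition W_P :: "('x::finite \<Rightarrow> nat) \<Rightarrow> ('x \<Rightarrow> 'x \<Rightarrow> real) \<Rightarrow> real" where
  "W_P n \<Phi> = Max ((\<lambda>\<mu>. S_R \<mu> \<Phi>) ` roommate_matchings n)"

definition bipartite_matchings :: "('x::finite \<Rightarrow> nat) \<Rightarrow> ('x \<Rightarrow> nat) \<Rightarrow> ('x \<Rightarrow> 'x \<Rightarrow> nat) set" where
  "bipartite_matchings n m = {\<nu>. (\<forall>x. (\<Sum>y\<in>UNIV. \<nu> x y) \<le> n x) \<and>
      (\<forall>y. (\<Sum>x\<in>UNIV. \<nu> x y) \<le> m y)}"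

definition W_B :: "('x::finite \<Rightarrow> nat) \<Rightarrow> ('x \<Rightarrow> nat) \<Rightarrow> ('x \<Rightarrow> 'x \<Rightarrow> real) \<Rightarrow> real" where
  "W_B n m \<Psi> = Max ((\<lambda>\<nu>. \<Sum>x\<in>UNIV. \<Sum>y\<in>UNIV. real (\<nu> x y) * \<Psi> x y) ` bipartite_matchings n m)"

end

theory Submission
  imports Defs "HOL-Library.Function_Algebras" "HOL-Library.FuncSet"
begin

text \<open>A roommate matching, written as the symmetric bipartite matching that lists every matched
  individual once as a row and once as a column (so a pair of two type-\<open>x\<close> individuals counts
  twice on the diagonal), has the same surplus; hence \<open>W_P \<le> W_B\<close>. Conversely, an optimal bipartite matching \<open>\<nu>\<close> splits as
  \<open>\<nu> = h + (\<nu> - h)\<close> where the row and column sums of both parts are those of \<open>\<nu>\<close> halved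
  and rounded. As every \<open>n x\<close> is even, rounding up still gives at most \<open>n x / 2\<close>, so each part
  \<open>g\<close> symmetrises to the roommate matching \<open>g + g\<^sup>T\<close> (diagonal \<open>g x x\<close>); for symmetric
  \<open>\<Phi>\<close> the two symmetrised parts together are worth twice the surplus of \<open>\<nu>\<close>, so one of
  them is worth at least as much.

  The splitting is the balanced edge 2-colouring of a bipartite multigraph. It is proved by
  induction on the number of edges: a path of three edges is contracted to one edge, and when no
  such path exists every vertex of degree at least two is the centre of a star, from which two
  edges are removed.\<close>

definition row_sum :: "('a \<Rightarrow> 'b::finite \<Rightarrow> nat) \<Rightarrow> 'a \<Rightarrow> nat" where
  "row_sum f x = (\<Sum>y\<in>UNIV. f x y)"

definition col_sum :: "('a::finite \<Rightarrow> 'b \<Rightarrow> nat) \<Rightarrow> 'b \<Rightarrow> nat" where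
  "col_sum f y = (\<Sum>x\<in>UNIV. f x y)"

definition total_sum :: "('a::finite \<Rightarrow> 'b::finite \<Rightarrow> nat) \<Rightarrow> nat" where
  "total_sum f = (\<Sum>x\<in>UNIV. row_sum f x)"

definition unit_mat :: "'a \<Rightarrow> 'b \<Rightarrow> 'a \<Rightarrow> 'b \<Rightarrow> nat" where
  "unit_mat a b = (\<lambda>x y. if x = a \<and> y = b then 1 else 0)"

definition transpose_mat :: "('a \<Rightarrow> 'b \<Rightarrow> nat) \<Rightarrow> 'b \<Rightarrow> 'a \<Rightarrow> nat" where
  "transpose_mat f = (\<lambda>y x. f x y)"

lemma unit_mat_apply [simp]: "unit_mat a b x y = (if x = a \<and> y = b then 1 else 0)"
  by (simp add: unit_mat_def)

lemma row_sum_add [simp]: "row_sum (f + g) x = row_sum f x + row_sum g x"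
  by (simp add: row_sum_def sum.distrib)

lemma col_sum_add [simp]: "col_sum (f + g) y = col_sum f y + col_sum g y"
  by (simp add: col_sum_def sum.distrib)

lemma total_sum_add [simp]: "total_sum (f + g) = total_sum f + total_sum g"
  by (simp add: total_sum_def sum.distrib)

lemma row_sum_unit_mat [simp]: "row_sum (unit_mat a b) x = (if x = a then 1 else 0)"
  by (simp add: row_sum_def)

lemma col_sum_unit_mat [simp]: "col_sum (unit_mat a b) y = (if y = b then 1 else 0)"
  by (simp add: col_sum_def)

lemma total_sum_unit_mat [simp]: "total_sum (unit_mat a b) = 1"
  by (simp add: total_sum_def)

lemma row_sum_transpose_mat [simp]: "row_sum (transpose_mat f) y = col_sum f y"
  by (simp add: transpose_mat_def row_sum_def col_sum_def)

lemma col_sum_transpose_mat [simp]: "col_sum (transpose_mat f) x = row_sum f x"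
  by (simp add: transpose_mat_def row_sum_def col_sum_def)

lemma total_sum_transpose_mat [simp]: "total_sum (transpose_mat f) = total_sum f"
  unfolding total_sum_def row_sum_def transpose_mat_def by (rule sum.swap)

lemma transpose_mat_le_iff [simp]: "transpose_mat h \<le> transpose_mat f \<longleftrightarrow> h \<le> f"
  unfolding transpose_mat_def le_fun_def by (rule all_comm)

lemma transpose_transpose_mat [simp]: "transpose_mat (transpose_mat f) = f"
  by (simp add: transpose_mat_def)

lemma row_sum_diff: "g \<le> f \<Longrightarrow> row_sum (f - g) x = row_sum f x - row_sum g x"
  by (simp add: row_sum_def le_fun_def sum_subtractf_nat)

lemma col_sum_diff: "g \<le> f \<Longrightarrow> col_sum (f - g) y = col_sum f y - col_sum g y"
  by (simp add: col_sum_def le_fun_def sum_subtractf_nat)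

lemma row_sum_mono: "g \<le> f \<Longrightarrow> row_sum g x \<le> row_sum f x"
  by (simp add: row_sum_def le_fun_def sum_mono)

lemma col_sum_mono: "g \<le> f \<Longrightarrow> col_sum g y \<le> col_sum f y"
  by (simp add: col_sum_def le_fun_def sum_mono)

lemma entry_le_row_sum: "f x y \<le> row_sum f x"
  unfolding row_sum_def by (rule member_le_sum) simp_all

lemma finite_matrices_le: "finite {f :: 'a::finite \<Rightarrow> 'b::finite \<Rightarrow> nat. f \<le> b}"
proof -
  have "{f. f \<le> b} = (\<Pi>\<^sub>E x\<in>UNIV. \<Pi>\<^sub>E y\<in>UNIV. {..b x y})"
    by (auto simp: le_fun_def PiE_UNIV_domain)
  then show ?thesis by (simp add: finite_PiE)
qed

lemma diff_add_cancel_mat: "g \<le> (f :: 'a \<Rightarrow> 'b \<Rightarrow> nat) \<Longrightarrow> f - g + g = f"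
  by (simp add: le_fun_def fun_eq_iff)

lemma add_le_if_le_diff:
  fixes f :: "'a \<Rightarrow> 'b \<Rightarrow> nat"
  assumes "g \<le> f - u" and "u \<le> f"
  shows "u + g \<le> f"
proof (intro le_funI)
  fix i j
  have "g i j \<le> f i j - u i j" "u i j \<le> f i j"
    using assms by (simp_all add: le_fun_def)
  then show "(u + g) i j \<le> f i j" by simp
qed

lemma unit_mat_le_if_row_sum_nonzero:
  assumes "row_sum f x \<noteq> 0"
  obtains y where "unit_mat x y \<le> f"
proof -
  obtain y where "f x y \<noteq> 0" using assms by (auto simp: row_sum_def)
  then have "unit_mat x y \<le> f" by (simp add: le_fun_def)
  then show thesis by (rule that)
qed

lemma unit_mat_le_if_col_sum_nonzero:
  assumes "col_sum f y \<noteq> 0"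
  obtains x where "unit_mat x y \<le> f"
proof -
  obtain x where "f x y \<noteq> 0" using assms by (auto simp: col_sum_def)
  then have "unit_mat x y \<le> f" by (simp add: le_fun_def)
  then show thesis by (rule that)
qed

lemma two_units_le_if_row_sum_ge_2:
  assumes "2 \<le> row_sum f x"
  obtains a b where "unit_mat x a + unit_mat x b \<le> f"
proof -
  obtain a where a: "unit_mat x a \<le> f"
    using assms unit_mat_le_if_row_sum_nonzero[of f x] by auto
  then have "row_sum (f - unit_mat x a) x \<noteq> 0"
    using assms by (simp add: row_sum_diff)
  then obtain b where "unit_mat x b \<le> f - unit_mat x a"
    by (rule unit_mat_le_if_row_sum_nonzero)
  then have "unit_mat x a + unit_mat x b \<le> f"
    using a by (rule add_le_if_le_diff)
  then show thesis by (rule that)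
qed

definition balanced_half ::
    "('a::finite \<Rightarrow> 'b::finite \<Rightarrow> nat) \<Rightarrow> ('a \<Rightarrow> 'b \<Rightarrow> nat) \<Rightarrow> bool" where
  "balanced_half h f \<longleftrightarrow> h \<le> f \<and>
     (\<forall>x. 2 * row_sum h x \<le> row_sum f x + 1 \<and> row_sum f x \<le> 2 * row_sum h x + 1) \<and>
     (\<forall>y. 2 * col_sum h y \<le> col_sum f y + 1 \<and> col_sum f y \<le> 2 * col_sum h y + 1)"

lemma balanced_halfI:
  assumes "h \<le> f"
    and "\<And>x. 2 * row_sum h x \<le> row_sum f x + 1 \<and> row_sum f x \<le> 2 * row_sum h x + 1"
    and "\<And>y. 2 * col_sum h y \<le> col_sum f y + 1 \<and> col_sum f y \<le> 2 * col_sum h y + 1"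
  shows "balanced_half h f"
  using assms by (simp add: balanced_half_def)

lemma balanced_halfD:
  assumes "balanced_half h f"
  shows "h \<le> f"
    and "2 * row_sum h x \<le> row_sum f x + 1" "row_sum f x \<le> 2 * row_sum h x + 1"
    and "2 * col_sum h y \<le> col_sum f y + 1" "col_sum f y \<le> 2 * col_sum h y + 1"
  using assms by (simp_all add: balanced_half_def)

lemma balanced_half_transpose_mat [simp]:
  "balanced_half (transpose_mat h) (transpose_mat f) \<longleftrightarrow> balanced_half h f"
  unfolding balanced_half_def by auto

lemma balanced_half_zero:
  assumes "\<And>x. row_sum f x \<le> 1" and "\<And>y. col_sum f y \<le> 1"
  shows "balanced_half 0 f"
  using assms by (intro balanced_halfI) (simp_all add: row_sum_def col_sum_def)

lemma balanced_half_extend: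
  assumes h: "balanced_half h g" and "h' \<le> f"
    and "\<And>x. row_sum f x = row_sum g x + 2 * r x" "\<And>x. row_sum h' x = row_sum h x + r x"
    and "\<And>y. col_sum f y = col_sum g y + 2 * c y" "\<And>y. col_sum h' y = col_sum h y + c y"
  shows "balanced_half h' f"
proof (rule balanced_halfI)
  show "h' \<le> f" by fact
  show "2 * row_sum h' x \<le> row_sum f x + 1 \<and> row_sum f x \<le> 2 * row_sum h' x + 1" for x
    using balanced_halfD(2,3)[OF h, of x] by (simp add: assms(3,4))
  show "2 * col_sum h' y \<le> col_sum f y + 1 \<and> col_sum f y \<le> 2 * col_sum h' y + 1" for y
    using balanced_halfD(4,5)[OF h, of y] by (simp add: assms(5,6))
qed

lemma balanced_half_complement:
  assumes h: "balanced_half h f"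
  shows "balanced_half (f - h) f"
proof (rule balanced_halfI)
  have "h \<le> f" using h by (rule balanced_halfD)
  show "f - h \<le> f" by (intro le_funI) simp
  show "2 * row_sum (f - h) x \<le> row_sum f x + 1 \<and> row_sum f x \<le> 2 * row_sum (f - h) x + 1" for x
    using balanced_halfD(2,3)[OF h, of x] row_sum_mono[OF \<open>h \<le> f\<close>, of x]
    by (simp add: row_sum_diff[OF \<open>h \<le> f\<close>]; arith)
  show "2 * col_sum (f - h) y \<le> col_sum f y + 1 \<and> col_sum f y \<le> 2 * col_sum (f - h) y + 1" for y
    using balanced_halfD(4,5)[OF h, of y] col_sum_mono[OF \<open>h \<le> f\<close>, of y]
    by (simp add: col_sum_diff[OF \<open>h \<le> f\<close>]; arith)
qed

lemma balanced_half_row_col_sum_le: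
  fixes f :: "'a::finite \<Rightarrow> 'a \<Rightarrow> nat"
  assumes h: "balanced_half h f"
    and "row_sum f x \<le> k" "col_sum f x \<le> k" "even k"
  shows "row_sum h x + col_sum h x \<le> k"
proof -
  obtain m where "k = 2 * m" using \<open>even k\<close> by blast
  with assms(2,3) balanced_halfD(2)[OF h, of x] balanced_halfD(4)[OF h, of x]
  show ?thesis by presburger
qed

text \<open>The path \<open>(z,a), (x,a), (x,b)\<close> is contracted to the single entry \<open>(z,b)\<close>. A balanced half
  of the contracted matrix either contains \<open>(z,b)\<close>, which is traded back for \<open>(z,a)\<close> and
  \<open>(x,b)\<close>, or not, and then \<open>(x,a)\<close> is added; either way row \<open>x\<close> and column \<open>a\<close>
  gain one of their two new units.\<close>

lemma balanced_half_exists_if_path: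
  fixes f :: "'a::finite \<Rightarrow> 'b::finite \<Rightarrow> nat"
  assumes smaller:
      "\<And>g :: 'a \<Rightarrow> 'b \<Rightarrow> nat. total_sum g < total_sum f \<Longrightarrow> \<exists>h. balanced_half h g"
    and path: "unit_mat x a + unit_mat x b + unit_mat z a \<le> f"
  shows "\<exists>h. balanced_half h f"
proof -
  define f0 where "f0 = f - (unit_mat x a + unit_mat x b + unit_mat z a)"
  have f: "f = f0 + (unit_mat x a + unit_mat x b + unit_mat z a)"
    using path by (simp add: f0_def diff_add_cancel_mat)
  define g where "g = f0 + unit_mat z b"
  have "total_sum g < total_sum f" by (simp add: f g_def)
  then obtain h where h: "balanced_half h g" using smaller by blast
  have hg: "h i j \<le> f0 i j + unit_mat z b i j" for i j
    using balanced_halfD(1)[OF h] by (simp add: g_def le_fun_def)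
  obtain h' where h': "h' \<le> f"
    and rows: "\<And>i. row_sum h' i = row_sum h i + row_sum (unit_mat x a) i"
    and cols: "\<And>j. col_sum h' j = col_sum h j + col_sum (unit_mat x a) j"
  proof (cases "h z b = 0")
    case True
    have "h + unit_mat x a \<le> f"
    proof (intro le_funI)
      fix i j show "(h + unit_mat x a) i j \<le> f i j"
        using hg[of i j] True by (cases "i = z \<and> j = b") (auto simp: f)
    qed
    then show thesis by (rule that) simp_all
  next
    case False
    define h0 where "h0 = h - unit_mat z b"
    have h0: "h = h0 + unit_mat z b"
      using False by (simp add: h0_def fun_eq_iff)
    have "h0 + unit_mat x b + unit_mat z a \<le> f"
    proof (intro le_funI)
      fix i j show "(h0 + unit_mat x b + unit_mat z a) i j \<le> f i j"
        using hg[of i j] by (auto simp: f h0)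
    qed
    then show thesis by (rule that) (simp_all add: h0)
  qed
  have "balanced_half h' f"
    using h h'
    by (rule balanced_half_extend[where r = "row_sum (unit_mat x a)" and c = "col_sum (unit_mat x a)"])
      (simp_all add: f g_def rows cols)
  then show ?thesis by blast
qed

text \<open>Column \<open>a\<close> contains nothing besides \<open>(x,a)\<close> (and \<open>(x,b)\<close> if \<open>a = b\<close>), so after removing
  both units the choice which one to put back is dictated by column \<open>b\<close> alone.\<close>

lemma balanced_half_exists_if_pendant:
  fixes f :: "'a::finite \<Rightarrow> 'b::finite \<Rightarrow> nat"
  assumes smaller:
      "\<And>g :: 'a \<Rightarrow> 'b \<Rightarrow> nat. total_sum g < total_sum f \<Longrightarrow> \<exists>h. balanced_half h g"
    and pair: "unit_mat x a + unit_mat x b \<le> f"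
    and pendant: "col_sum (f - (unit_mat x a + unit_mat x b)) a = 0"
  shows "\<exists>h. balanced_half h f"
proof -
  define f0 where "f0 = f - (unit_mat x a + unit_mat x b)"
  have f: "f = f0 + (unit_mat x a + unit_mat x b)"
    using pair by (simp add: f0_def diff_add_cancel_mat)
  have "total_sum f0 < total_sum f" by (simp add: f)
  then obtain h where h: "balanced_half h f0" using smaller by blast
  have "col_sum f0 a = 0"
    using pendant by (simp add: f0_def)
  moreover have "col_sum h a \<le> col_sum f0 a"
    using balanced_halfD(1)[OF h] by (rule col_sum_mono)
  ultimately have "col_sum h a = 0" by simp
  have hf0: "h i j \<le> f0 i j" for i j
    using balanced_halfD(1)[OF h] by (simp add: le_fun_def)
  define c where "c = (if 2 * col_sum h b \<le> col_sum f0 b then b else a)"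
  have "balanced_half (h + unit_mat x c) f"
  proof (rule balanced_halfI)
    show "h + unit_mat x c \<le> f"
      by (intro le_funI) (auto simp: f c_def intro: le_SucI hf0)
    show "2 * row_sum (h + unit_mat x c) i \<le> row_sum f i + 1
        \<and> row_sum f i \<le> 2 * row_sum (h + unit_mat x c) i + 1" for i
      using balanced_halfD(2,3)[OF h, of i] by (simp add: f)
    show "2 * col_sum (h + unit_mat x c) j \<le> col_sum f j + 1
        \<and> col_sum f j \<le> 2 * col_sum (h + unit_mat x c) j + 1" for j
      using balanced_halfD(4,5)[OF h, of j] balanced_halfD(4,5)[OF h, of b]
        \<open>col_sum f0 a = 0\<close> \<open>col_sum h a = 0\<close>
      by (auto simp: f c_def)
  qed
  then show ?thesis by blast
qed

lemma balanced_half_exists_if_row_sum_ge_2: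
  fixes f :: "'a::finite \<Rightarrow> 'b::finite \<Rightarrow> nat"
  assumes smaller:
      "\<And>g :: 'a \<Rightarrow> 'b \<Rightarrow> nat. total_sum g < total_sum f \<Longrightarrow> \<exists>h. balanced_half h g"
    and "2 \<le> row_sum f x"
  shows "\<exists>h. balanced_half h f"
proof -
  obtain a b where pair: "unit_mat x a + unit_mat x b \<le> f"
    using assms(2) by (rule two_units_le_if_row_sum_ge_2)
  show ?thesis
  proof (cases "col_sum (f - (unit_mat x a + unit_mat x b)) a = 0")
    case True
    with smaller pair show ?thesis by (rule balanced_half_exists_if_pendant)
  next
    case False
    then obtain z where "unit_mat z a \<le> f - (unit_mat x a + unit_mat x b)"
      by (rule unit_mat_le_if_col_sum_nonzero)
    then have "unit_mat x a + unit_mat x b + unit_mat z a \<le> f"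
      using pair by (rule add_le_if_le_diff)
    with smaller show ?thesis by (rule balanced_half_exists_if_path)
  qed
qed

theorem balanced_half_exists: "\<exists>h. balanced_half h (f :: 'a::finite \<Rightarrow> 'b::finite \<Rightarrow> nat)"
proof (induction "total_sum f" arbitrary: f rule: less_induct)
  case less
  then have smaller:
      "\<And>g :: 'a \<Rightarrow> 'b \<Rightarrow> nat. total_sum g < total_sum f \<Longrightarrow> \<exists>h. balanced_half h g"
    by blast
  consider (row) x where "2 \<le> row_sum f x" | (col) y where "2 \<le> col_sum f y"
    | (small) "\<And>x. row_sum f x \<le> 1" "\<And>y. col_sum f y \<le> 1"
    by (metis Suc_1 Suc_le_mono not_less_eq_eq)
  then show ?case
  proof cases
    case row
    with smaller show ?thesis by (rule balanced_half_exists_if_row_sum_ge_2)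
  next
    case col
    have "\<exists>h. balanced_half h g"
      if "total_sum g < total_sum (transpose_mat f)" for g :: "'b \<Rightarrow> 'a \<Rightarrow> nat"
    proof -
      have "total_sum (transpose_mat g) < total_sum f"
        using that by simp
      then obtain h where "balanced_half h (transpose_mat g)"
        using smaller by blast
      then have "balanced_half (transpose_mat h) g"
        using balanced_half_transpose_mat[of "transpose_mat h" g] by simp
      then show ?thesis by blast
    qed
    moreover have "2 \<le> row_sum (transpose_mat f) y" using col by simp
    ultimately obtain h where "balanced_half h (transpose_mat f)"
      using balanced_half_exists_if_row_sum_ge_2 by blast
    then have "balanced_half (transpose_mat h) f"
      using balanced_half_transpose_mat[of "transpose_mat h" f] by simp
    then show ?thesis by blast
  next
    case small
    then show ?thesis using balanced_half_zero by blast
  qed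
qed

definition bipartite_surplus ::
    "('a::finite \<Rightarrow> 'b::finite \<Rightarrow> nat) \<Rightarrow> ('a \<Rightarrow> 'b \<Rightarrow> real) \<Rightarrow> real" where
  "bipartite_surplus \<nu> \<Psi> = (\<Sum>x\<in>UNIV. \<Sum>y\<in>UNIV. real (\<nu> x y) * \<Psi> x y)"

lemma W_B_eq_Max_bipartite_surplus:
  "W_B n m \<Psi> = Max ((\<lambda>\<nu>. bipartite_surplus \<nu> \<Psi>) ` bipartite_matchings n m)"
  by (simp add: W_B_def bipartite_surplus_def)

lemma bipartite_surplus_add:
  "bipartite_surplus (f + g) \<Psi> = bipartite_surplus f \<Psi> + bipartite_surplus g \<Psi>"
  by (simp add: bipartite_surplus_def distrib_right sum.distrib)

lemma bipartite_surplus_transpose_mat: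
  "bipartite_surplus (transpose_mat \<nu>) \<Psi> = bipartite_surplus \<nu> (\<lambda>x y. \<Psi> y x)"
  unfolding bipartite_surplus_def transpose_mat_def by (rule sum.swap)

lemma bipartite_surplus_half:
  "bipartite_surplus \<nu> (\<lambda>x y. \<Psi> x y / 2) = bipartite_surplus \<nu> \<Psi> / 2"
  by (simp add: bipartite_surplus_def sum_divide_distrib)

lemma bipartite_matchings_iff:
  "\<nu> \<in> bipartite_matchings n m \<longleftrightarrow> (\<forall>x. row_sum \<nu> x \<le> n x) \<and> (\<forall>y. col_sum \<nu> y \<le> m y)"
  by (simp add: bipartite_matchings_def row_sum_def col_sum_def)

lemma bipartite_matchings_le: "\<nu> \<in> bipartite_matchings n m \<Longrightarrow> \<nu> \<le> (\<lambda>x y. n x)"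
  by (intro le_funI) (meson bipartite_matchings_iff entry_le_row_sum order_trans)

definition bipartite_of_roommate :: "('a \<Rightarrow> 'a \<Rightarrow> nat) \<Rightarrow> 'a \<Rightarrow> 'a \<Rightarrow> nat" where
  "bipartite_of_roommate \<mu> x y = (if x = y then 2 * \<mu> x x else \<mu> x y)"

definition roommate_of_bipartite :: "('a \<Rightarrow> 'a \<Rightarrow> nat) \<Rightarrow> 'a \<Rightarrow> 'a \<Rightarrow> nat" where
  "roommate_of_bipartite \<nu> x y = (if x = y then \<nu> x x else \<nu> x y + \<nu> y x)"

lemma row_sum_bipartite_of_roommate:
  "row_sum (bipartite_of_roommate \<mu>) x = 2 * \<mu> x x + (\<Sum>y\<in>UNIV - {x}. \<mu> x y)"
proof -
  have "row_sum (bipartite_of_roommate \<mu>) x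
      = bipartite_of_roommate \<mu> x x + (\<Sum>y\<in>UNIV - {x}. bipartite_of_roommate \<mu> x y)"
    unfolding row_sum_def by (simp add: sum.remove)
  also have "(\<Sum>y\<in>UNIV - {x}. bipartite_of_roommate \<mu> x y) = (\<Sum>y\<in>UNIV - {x}. \<mu> x y)"
    by (rule sum.cong) (auto simp: bipartite_of_roommate_def)
  moreover have "bipartite_of_roommate \<mu> x x = 2 * \<mu> x x"
    by (simp add: bipartite_of_roommate_def)
  ultimately show ?thesis by simp
qed

lemma roommate_matchings_iff:
  "\<mu> \<in> roommate_matchings n \<longleftrightarrow>
     (\<forall>x y. \<mu> x y = \<mu> y x) \<and> (\<forall>x. row_sum (bipartite_of_roommate \<mu>) x \<le> n x)"
  by (simp add: roommate_matchings_def row_sum_bipartite_of_roommate)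

lemma roommate_matchings_le: "\<mu> \<in> roommate_matchings n \<Longrightarrow> \<mu> \<le> (\<lambda>x y. n x)"
proof (intro le_funI)
  fix x y assume "\<mu> \<in> roommate_matchings n"
  then have "row_sum (bipartite_of_roommate \<mu>) x \<le> n x" by (simp add: roommate_matchings_iff)
  moreover have "\<mu> x y \<le> bipartite_of_roommate \<mu> x y" by (simp add: bipartite_of_roommate_def)
  ultimately show "\<mu> x y \<le> n x" using entry_le_row_sum order_trans by metis
qed

lemma bipartite_of_roommate_mem:
  assumes "\<mu> \<in> roommate_matchings n"
  shows "bipartite_of_roommate \<mu> \<in> bipartite_matchings n n"
proof -
  have "transpose_mat (bipartite_of_roommate \<mu>) = bipartite_of_roommate \<mu>"
    using assms
    by (auto simp: roommate_matchings_iff transpose_mat_def bipartite_of_roommate_def fun_eq_iff)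
  then have "col_sum (bipartite_of_roommate \<mu>) x = row_sum (bipartite_of_roommate \<mu>) x" for x
    by (metis row_sum_transpose_mat)
  with assms show ?thesis by (simp add: roommate_matchings_iff bipartite_matchings_iff)
qed

lemma bipartite_of_roommate_of_bipartite:
  "bipartite_of_roommate (roommate_of_bipartite \<nu>) = \<nu> + transpose_mat \<nu>"
  by (simp add: fun_eq_iff bipartite_of_roommate_def roommate_of_bipartite_def transpose_mat_def)

lemma roommate_of_bipartite_mem:
  assumes "\<And>x. row_sum \<nu> x + col_sum \<nu> x \<le> n x"
  shows "roommate_of_bipartite \<nu> \<in> roommate_matchings n"
  using assms by (simp add: roommate_matchings_iff bipartite_of_roommate_of_bipartite)
    (simp add: roommate_of_bipartite_def)

lemma sum_off_diagonal:
  fixes k :: "'a::finite \<Rightarrow> 'a \<Rightarrow> 'c::comm_monoid_add"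
  shows "(\<Sum>p\<in>{(x, y). x \<noteq> y}. k (fst p) (snd p))
    = (\<Sum>x\<in>UNIV. \<Sum>y\<in>UNIV. if x = y then 0 else k x y)"
proof -
  have "(\<Sum>p\<in>{(x, y). x \<noteq> y}. k (fst p) (snd p))
      = (\<Sum>p\<in>UNIV \<times> UNIV. if fst p = snd p then 0 else k (fst p) (snd p))"
    by (simp add: sum.If_cases Collect_neg_eq Compl_eq_Diff_UNIV split_def)
  then show ?thesis by (simp add: sum.cartesian_product split_def)
qed

lemma S_R_eq_double_sum:
  "S_R \<mu> \<Phi> = (\<Sum>x\<in>UNIV. \<Sum>y\<in>UNIV. real (\<mu> x y) * (if x = y then \<Phi> x x else \<Phi> x y / 2))"
proof -
  have "(\<Sum>y\<in>UNIV. real (\<mu> x y) * (if x = y then \<Phi> x x else \<Phi> x y / 2))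
      = real (\<mu> x x) * \<Phi> x x + (\<Sum>y\<in>UNIV. if x = y then 0 else real (\<mu> x y) * \<Phi> x y / 2)" for x
    by (simp add: if_distrib sum.If_cases Collect_neg_eq Compl_eq_Diff_UNIV)
  then show ?thesis
    by (simp add: S_R_def sum_off_diagonal[of "\<lambda>x y. real (\<mu> x y) * \<Phi> x y / 2"] sum.distrib)
qed

lemma bipartite_surplus_bipartite_of_roommate:
  "bipartite_surplus (bipartite_of_roommate \<mu>) (\<lambda>x y. \<Phi> x y / 2) = S_R \<mu> \<Phi>"
  unfolding S_R_eq_double_sum bipartite_surplus_def bipartite_of_roommate_def
  by (intro sum.cong) auto

lemma S_R_roommate_of_bipartite:
  assumes "\<forall>x y. \<Phi> x y = \<Phi> y x"
  shows "S_R (roommate_of_bipartite \<nu>) \<Phi> = bipartite_surplus \<nu> \<Phi>"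
proof -
  have "(\<lambda>x y. \<Phi> y x / 2) = (\<lambda>x y. \<Phi> x y / 2)" using assms by auto
  then have "S_R (roommate_of_bipartite \<nu>) \<Phi> = 2 * bipartite_surplus \<nu> (\<lambda>x y. \<Phi> x y / 2)"
    by (simp flip: bipartite_surplus_bipartite_of_roommate
        add: bipartite_of_roommate_of_bipartite bipartite_surplus_add bipartite_surplus_transpose_mat)
  then show ?thesis by (simp add: bipartite_surplus_half)
qed

lemma roommate_le_bipartite:
  assumes "\<mu> \<in> roommate_matchings n"
  shows "\<exists>\<nu>\<in>bipartite_matchings n n. S_R \<mu> \<Phi> \<le> bipartite_surplus \<nu> (\<lambda>x y. \<Phi> x y / 2)"
  using bipartite_of_roommate_mem[OF assms]
  by (intro bexI[of _ "bipartite_of_roommate \<mu>"])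
    (simp_all add: bipartite_surplus_bipartite_of_roommate)

lemma bipartite_le_roommate:
  assumes "\<forall>x. even (n x)" and "\<forall>x y. \<Phi> x y = \<Phi> y x"
    and \<nu>: "\<nu> \<in> bipartite_matchings n n"
  shows "\<exists>\<mu>\<in>roommate_matchings n. bipartite_surplus \<nu> (\<lambda>x y. \<Phi> x y / 2) \<le> S_R \<mu> \<Phi>"
proof -
  obtain h where h: "balanced_half h \<nu>" using balanced_half_exists by blast
  have \<nu>_split: "\<nu> = h + (\<nu> - h)"
    using balanced_halfD(1)[OF h] by (simp add: le_fun_def fun_eq_iff)
  have "roommate_of_bipartite g \<in> roommate_matchings n" if "balanced_half g \<nu>" for g
    using balanced_half_row_col_sum_le[OF that] \<nu> assms(1)
    by (intro roommate_of_bipartite_mem) (simp add: bipartite_matchings_iff)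
  then have "roommate_of_bipartite h \<in> roommate_matchings n"
    "roommate_of_bipartite (\<nu> - h) \<in> roommate_matchings n"
    using h balanced_half_complement[OF h] by blast+
  moreover have "S_R (roommate_of_bipartite h) \<Phi> + S_R (roommate_of_bipartite (\<nu> - h)) \<Phi>
      = 2 * bipartite_surplus \<nu> (\<lambda>x y. \<Phi> x y / 2)"
    using assms(2) \<nu>_split
    by (simp add: S_R_roommate_of_bipartite bipartite_surplus_half flip: bipartite_surplus_add)
  then have "bipartite_surplus \<nu> (\<lambda>x y. \<Phi> x y / 2) \<le> S_R (roommate_of_bipartite h) \<Phi>
      \<or> bipartite_surplus \<nu> (\<lambda>x y. \<Phi> x y / 2) \<le> S_R (roommate_of_bipartite (\<nu> - h)) \<Phi>"
    by linarith
  ultimately show ?thesis by blast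
qed

lemma Max_image_le_Max_image:
  assumes "finite A" "A \<noteq> {}" "finite B"
    and "\<And>a. a \<in> A \<Longrightarrow> \<exists>b\<in>B. f a \<le> g b"
  shows "Max (f ` A) \<le> Max (g ` B)"
proof (subst Max_le_iff)
  show "\<forall>c\<in>f ` A. c \<le> Max (g ` B)"
  proof
    fix c assume "c \<in> f ` A"
    then obtain a b where "b \<in> B" "c \<le> g b" using assms(4) by blast
    then show "c \<le> Max (g ` B)"
      using \<open>finite B\<close> by (meson Max_ge finite_imageI imageI order_trans)
  qed
qed (use assms in auto)

theorem proposition1:
  fixes n :: "'x::finite \<Rightarrow> nat" and \<Phi> :: "'x \<Rightarrow> 'x \<Rightarrow> real"
  assumes "\<forall>x. even (n x)"
    and "\<forall>x y. \<Phi> x y = \<Phi> y x"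
  shows "W_P n \<Phi> = W_B n n (\<lambda>x y. \<Phi> x y / 2)"
proof -
  have "finite (roommate_matchings n)" "finite (bipartite_matchings n n)"
    using roommate_matchings_le bipartite_matchings_le
    by (blast intro: finite_subset[OF _ finite_matrices_le])+
  moreover have "0 \<in> roommate_matchings n" "0 \<in> bipartite_matchings n n"
    by (simp_all add: roommate_matchings_def bipartite_matchings_def)
  ultimately show ?thesis
    unfolding W_P_def W_B_eq_Max_bipartite_surplus
    using roommate_le_bipartite bipartite_le_roommate[OF assms]
    by (intro antisym Max_image_le_Max_image) auto
qed

end
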